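(* Let $\{\tau_n\}_{n=1}^\infty$ be a sequence of nonnegative real numbers. Suppose that either $\liminf_{n\to\infty}\tau_n>0$, or that both of the following hold: (a) $\liminf_{n\to\infty} n\tau_n>0$, and (b) there is a constant $C\in(0,\infty)$ such that for each integer $n\ge 0$, if $2^{n-1}\le k<2^n$ then $C\tau_{2^{n-1}}\ge \tau_k\ge C^{-1}\tau_{2^n}$. Then $\{\tau_n\}$ satisfies Condition A.
   Context: "Positive" means nonnegative and "increasing"/"decreasing" mean non-decreasing/non-increasing. A nonnegative sequence $\{\tau_n\}_{n\ge1}$ satisfies Condition A if for every nonnegative non-increasing sequence $\{c_n\}_{n\ge1}$ such that $\sum_{n=1}^\infty \tau_n\min(nc_n,1)<\infty$, we also have $\sum_{n=1}^\infty \tau_n n c_n<\infty$. *)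

theory Defs
  imports "HOL-Analysis.Analysis"
begin

text \<open>Sequences are indexed from 1; the value at index 0 is ignored.
  Series over n >= 1 of nonnegative terms converge iff the shifted series is summable.\<close>

definition conditionA :: "(nat \<Rightarrow> real) \<Rightarrow> bool" where
  "conditionA \<tau> \<longleftrightarrow>
     (\<forall>c :: nat \<Rightarrow> real.
        (\<forall>n\<ge>1. 0 \<le> c n) \<longrightarrow>
        (\<forall>m n. 1 \<le> m \<longrightarrow> m \<le> n \<longrightarrow> c n \<le> c m) \<longrightarrow>
        summable (\<lambda>n. \<tau> (n+1) * min (real (n+1) * c (n+1)) 1) \<longrightarrow>
        summable (\<lambda>n. \<tau> (n+1) * (real (n+1) * c (n+1))))"

end

theory Submission
  imports Defs
begin

text \<open>Only \<open>liminf n \<tau>\<^sub>n > 0\<close> matters, and the first alternative implies it. If \<open>n \<tau>\<^sub>n \<ge> \<delta>\<close> eventually and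
  \<open>n c\<^sub>n \<ge> 1\<close>, then on the block \<open>n/2 < k \<le> n\<close> monotonicity gives \<open>k c\<^sub>k \<ge> 1/2\<close> and
  \<open>\<tau>\<^sub>k \<ge> \<delta>/n\<close>, so the block contributes at least \<open>\<delta>/4\<close> to \<open>\<Sum> \<tau>\<^sub>k min (k c\<^sub>k) 1\<close>.
  Convergence therefore forces \<open>n c\<^sub>n < 1\<close> eventually, and then the two series agree
  from some index on.\<close>

lemma liminf_pos_imp_eventually_gt:
  fixes X :: "nat \<Rightarrow> real"
  assumes "0 < liminf (\<lambda>n. ereal (X n))"
  shows "\<exists>d>0. \<forall>\<^sub>F n in sequentially. d < X n"
proof -
  obtain d where d: "0 < ereal d" "ereal d < liminf (\<lambda>n. ereal (X n))"
    using ereal_dense2[OF assms] by blast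
  from less_LiminfD[OF d(2)] have "\<forall>\<^sub>F n in sequentially. d < X n"
    by simp
  with d(1) show ?thesis
    by auto
qed

lemma liminf_mult_pos_if_liminf_pos:
  fixes \<tau> :: "nat \<Rightarrow> real"
  assumes "0 < liminf (\<lambda>n. ereal (\<tau> n))"
  shows "0 < liminf (\<lambda>n. ereal (real n * \<tau> n))"
proof -
  obtain d where "d > 0" and ev: "\<forall>\<^sub>F n in sequentially. d < \<tau> n"
    using liminf_pos_imp_eventually_gt[OF assms] by blast
  have "\<forall>\<^sub>F n in sequentially. ereal d \<le> ereal (real n * \<tau> n)"
    using ev eventually_ge_at_top[of 1]
  proof eventually_elim
    case (elim n)
    with \<open>d > 0\<close> have "\<tau> n \<le> real n * \<tau> n"
      by (simp add: mult_le_cancel_right1)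
    with elim show ?case
      by simp
  qed
  then have "ereal d \<le> liminf (\<lambda>n. ereal (real n * \<tau> n))"
    by (rule Liminf_bounded)
  moreover have "0 < ereal d"
    using \<open>d > 0\<close> by simp
  ultimately show ?thesis
    by (meson less_le_trans)
qed

lemma block_sum_ge:
  fixes \<tau> c :: "nat \<Rightarrow> real"
  assumes "\<delta> > 0"
    and lower: "\<And>k. k \<ge> N \<Longrightarrow> \<delta> \<le> real k * \<tau> k"
    and antimono: "\<And>m k. 1 \<le> m \<Longrightarrow> m \<le> k \<Longrightarrow> c k \<le> c m"
    and large: "1 \<le> real n * c n"
    and "N \<le> n div 2"
  shows "\<delta> / 4 \<le> (\<Sum>k\<in>{n div 2<..n}. \<tau> k * min (real k * c k) 1)"
proof -
  have "n \<ge> 1"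
    using large by (cases n) auto
  have term_ge: "\<delta> / real n * (1/2) \<le> \<tau> k * min (real k * c k) 1"
    if "k \<in> {n div 2<..n}" for k
  proof -
    from that have k: "1 \<le> k" "k \<le> n" "N \<le> k" "n \<le> 2 * k"
      using \<open>N \<le> n div 2\<close> by auto
    have "1/2 \<le> real k / real n"
      using k \<open>n \<ge> 1\<close> by (simp add: field_simps)
    also have "\<dots> \<le> real k * c n"
    proof -
      have "1 / real n \<le> c n"
        using large \<open>n \<ge> 1\<close> by (simp add: field_simps mult.commute)
      then show ?thesis
        by (metis divide_real_def mult_left_mono mult_1 of_nat_0_le_iff inverse_eq_divide)
    qed
    also have "\<dots> \<le> real k * c k"
      using antimono[OF k(1,2)] by (simp add: mult_left_mono)
    finally have min_ge: "1/2 \<le> min (real k * c k) 1"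
      by simp
    have "\<delta> / real n \<le> \<delta> / real k"
      using k \<open>\<delta> > 0\<close> by (simp add: frac_le)
    also have "\<dots> \<le> \<tau> k"
      using lower[OF k(3)] k(1) by (simp add: field_simps mult.commute)
    finally have "\<delta> / real n \<le> \<tau> k" .
    moreover have "0 \<le> \<delta> / real n"
      using \<open>\<delta> > 0\<close> by simp
    ultimately show ?thesis
      using min_ge by (intro mult_mono) auto
  qed
  have "\<delta> / 4 = real n / 2 * (\<delta> / real n * (1/2))"
    using \<open>n \<ge> 1\<close> by (simp add: field_simps)
  also have "\<dots> \<le> real (card {n div 2<..n}) * (\<delta> / real n * (1/2))"
    using \<open>\<delta> > 0\<close> by (intro mult_right_mono) auto
  also have "\<dots> \<le> (\<Sum>k\<in>{n div 2<..n}. \<tau> k * min (real k * c k) 1)"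
    using term_ge by (intro sum_bounded_below) auto
  finally show ?thesis .
qed

lemma eventually_mult_lt_1:
  fixes \<tau> c :: "nat \<Rightarrow> real"
  assumes "\<delta> > 0"
    and lower: "\<forall>\<^sub>F k in sequentially. \<delta> \<le> real k * \<tau> k"
    and antimono: "\<And>m k. 1 \<le> m \<Longrightarrow> m \<le> k \<Longrightarrow> c k \<le> c m"
    and summable: "summable (\<lambda>k. \<tau> k * min (real k * c k) 1)"
  shows "\<forall>\<^sub>F n in sequentially. real n * c n < 1"
proof -
  obtain N where N: "\<And>k. k \<ge> N \<Longrightarrow> \<delta> \<le> real k * \<tau> k"
    using lower by (auto simp: eventually_sequentially)
  obtain M where M: "\<And>m n. m \<ge> M \<Longrightarrow>
      norm (\<Sum>k=m..<n. \<tau> k * min (real k * c k) 1) < \<delta> / 4"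
    using summable \<open>\<delta> > 0\<close> unfolding summable_Cauchy by (meson zero_less_divide_iff zero_less_numeral)
  have "real n * c n < 1" if "n \<ge> 2 * (M + N)" for n
  proof (rule ccontr)
    assume "\<not> real n * c n < 1"
    then have "\<delta> / 4 \<le> (\<Sum>k\<in>{n div 2<..n}. \<tau> k * min (real k * c k) 1)"
      using that by (intro block_sum_ge[OF \<open>\<delta> > 0\<close> N antimono]) auto
    also have "\<dots> = (\<Sum>k=Suc (n div 2)..<Suc n. \<tau> k * min (real k * c k) 1)"
      by (rule sum.cong) auto
    also have "\<dots> < \<delta> / 4"
    proof -
      have "M \<le> Suc (n div 2)"
        using that by simp
      from M[OF this, of "Suc n"] show ?thesis
        by (metis abs_ge_self le_less_trans real_norm_def)
    qed
    finally show False
      by simp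
  qed
  then show ?thesis
    by (auto simp: eventually_sequentially)
qed

lemma conditionA_if_liminf_mult_pos:
  fixes \<tau> :: "nat \<Rightarrow> real"
  assumes "0 < liminf (\<lambda>n. ereal (real n * \<tau> n))"
  shows "conditionA \<tau>"
  unfolding conditionA_def
proof (intro allI impI)
  fix c :: "nat \<Rightarrow> real"
  assume antimono: "\<forall>m n. 1 \<le> m \<longrightarrow> m \<le> n \<longrightarrow> c n \<le> c m"
    and "summable (\<lambda>n. \<tau> (n+1) * min (real (n+1) * c (n+1)) 1)"
  then have summable: "summable (\<lambda>n. \<tau> n * min (real n * c n) 1)"
    using summable_Suc_iff[of "\<lambda>n. \<tau> n * min (real n * c n) 1"] by simp
  obtain \<delta> where "\<delta> > 0" and "\<forall>\<^sub>F n in sequentially. \<delta> < real n * \<tau> n"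
    using liminf_pos_imp_eventually_gt[OF assms] by blast
  then have "\<forall>\<^sub>F n in sequentially. real n * c n < 1"
    using antimono summable
    by (intro eventually_mult_lt_1[of \<delta> \<tau>]) (auto elim: eventually_mono)
  then have "\<forall>\<^sub>F n in sequentially. \<tau> n * min (real n * c n) 1 = \<tau> n * (real n * c n)"
    by eventually_elim simp
  with summable have "summable (\<lambda>n. \<tau> n * (real n * c n))"
    using summable_cong by fastforce
  then show "summable (\<lambda>n. \<tau> (n+1) * (real (n+1) * c (n+1)))"
    using summable_Suc_iff[of "\<lambda>n. \<tau> n * (real n * c n)"] by simp
qed

theorem proposition1:
  fixes \<tau> :: "nat \<Rightarrow> real"
  assumes nonneg: "\<And>n. n \<ge> 1 \<Longrightarrow> 0 \<le> \<tau> n"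
  assumes hyp: "liminf (\<lambda>n. ereal (\<tau> n)) > 0 \<or>
    (liminf (\<lambda>n. ereal (real n * \<tau> n)) > 0 \<and>
     (\<exists>C::real. 0 < C \<and>
        (\<forall>n::nat. \<forall>k::nat. 1 \<le> k \<and> 2 ^ n \<le> 2 * k \<and> k < 2 ^ n \<longrightarrow>
           C * \<tau> (2 ^ (n - 1)) \<ge> \<tau> k \<and> \<tau> k \<ge> \<tau> (2 ^ n) / C)))"
  shows "conditionA \<tau>"
proof -
  from hyp have "0 < liminf (\<lambda>n. ereal (real n * \<tau> n))"
    using liminf_mult_pos_if_liminf_pos by blast
  then show ?thesis
    by (rule conditionA_if_liminf_mult_pos)
qed

end
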